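(* Let $n,k_1,k_2\in\mathbb N$ with $k_1+k_2<n$. Every Side-By-Side percentile mechanism, i.e. every percentile mechanism $\mathcal{PM}_{\vec v}$, $\vec v\in[0,1]^2$, that places the facility of capacity $k_1$ at $x_i$ and the facility of capacity $k_2$ at $x_{i+1}$ for some $i\in\{1,\dots,n-1\}$ (in sorted order), is Equilibrium Stable.
   Context: There are $n$ agents with positions $\vec x\in[0,1]^n$ and two facilities with capacities $k_1,k_2$; a location $\vec y=(y_1,y_2)$ places the facility of capacity $k_j$ at $y_j$. A fixed priority order breaks ties. FCFS game induced by $(\vec x,\vec y)$: each agent $i$ chooses $s_i\in\{1,2\}$; $\mathcal S_j$ = agents choosing $j$; $T_j\subseteq\mathcal S_j$ = the $\min(k_j,|\mathcal S_j|)$ agents of $\mathcal S_j$ closest to $y_j$ (ties by priority); utility $u_i=1-|x_i-y_j|$ if $i\in T_j$, else $0$. $NE(\vec x,\vec y)$ = set of pure Nash equilibria; $SW_\gamma=\sum_iu_i$. A mechanism $M:[0,1]^n\to\mathbb R^2$ is absolutely truthful if for every $i,\vec x,x_i'\in[0,1],\vec s_{-i}$: $\max_{s_i}u_i(\vec x,M(\vec x);s_i,\vec s_{-i})\ge\max_{s_i'}u_i(\vec x,M(x_i',\vec x_{-i});s_i',\vec s_{-i})$; it is Equilibrium Stable (ES) if it is absolutely truthful and for every $\vec x$ all $\gamma\in NE(\vec x,M(\vec x))$ give the same $SW_\gamma(\vec x,M(\vec x))$. Percentile mechanism $\mathcal{PM}_{\vec v}$: sort reports $x_1\le\dots\le x_n$,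 set $y_j=x_{\lfloor(n-1)v_j\rfloor+1}$. *)

theory Defs
  imports Main "HOL.Real"
begin

(* Agents are 0..n-1; positions x :: nat => real (only x i, i < n, matter).
   Priority: prio :: nat => nat injective on agents; smaller value = higher priority. *)

definition fpos :: "real \<times> real \<Rightarrow> nat \<Rightarrow> real" where
  "fpos y j = (if j = 1 then fst y else snd y)"

definition fcap :: "nat \<times> nat \<Rightarrow> nat \<Rightarrow> nat" where
  "fcap k j = (if j = 1 then fst k else snd k)"

definition choosers :: "nat \<Rightarrow> (nat \<Rightarrow> nat) \<Rightarrow> nat \<Rightarrow> nat set" where
  "choosers n s j = {i. i < n \<and> s i = j}"

definition precedes :: "(nat \<Rightarrow> nat) \<Rightarrow> (nat \<Rightarrow> real) \<Rightarrow> real \<times> real \<Rightarrow> nat \<Rightarrow> nat \<Rightarrow> nat \<Rightarrow> bool" where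
  "precedes prio x y j l i \<longleftrightarrow>
     \<bar>x l - fpos y j\<bar> < \<bar>x i - fpos y j\<bar> \<or>
     (\<bar>x l - fpos y j\<bar> = \<bar>x i - fpos y j\<bar> \<and> prio l < prio i)"

(* T_j: the min(k_j,|S_j|) agents of S_j closest to y_j, ties by priority *)
definition served :: "nat \<Rightarrow> nat \<times> nat \<Rightarrow> (nat \<Rightarrow> nat) \<Rightarrow> (nat \<Rightarrow> real) \<Rightarrow> real \<times> real
                       \<Rightarrow> (nat \<Rightarrow> nat) \<Rightarrow> nat \<Rightarrow> nat set" where
  "served n k prio x y s j =
     {i \<in> choosers n s j. card {l \<in> choosers n s j. precedes prio x y j l i} < fcap k j}"

definition util :: "nat \<Rightarrow> nat \<times> nat \<Rightarrow> (nat \<Rightarrow> nat) \<Rightarrow> (nat \<Rightarrow> real) \<Rightarrow> real \<times> real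
                     \<Rightarrow> (nat \<Rightarrow> nat) \<Rightarrow> nat \<Rightarrow> real" where
  "util n k prio x y s i =
     (if i \<in> served n k prio x y s (s i) then 1 - \<bar>x i - fpos y (s i)\<bar> else 0)"

definition profile :: "nat \<Rightarrow> (nat \<Rightarrow> nat) \<Rightarrow> bool" where
  "profile n s \<longleftrightarrow> (\<forall>i<n. s i \<in> {1, 2})"

definition positions :: "nat \<Rightarrow> (nat \<Rightarrow> real) \<Rightarrow> bool" where
  "positions n x \<longleftrightarrow> (\<forall>i<n. 0 \<le> x i \<and> x i \<le> 1)"

definition is_NE :: "nat \<Rightarrow> nat \<times> nat \<Rightarrow> (nat \<Rightarrow> nat) \<Rightarrow> (nat \<Rightarrow> real) \<Rightarrow> real \<times> real
                      \<Rightarrow> (nat \<Rightarrow> nat) \<Rightarrow> bool" where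
  "is_NE n k prio x y s \<longleftrightarrow> profile n s \<and>
     (\<forall>i<n. \<forall>a\<in>{1,2}. util n k prio x y (s(i := a)) i \<le> util n k prio x y s i)"

definition SW :: "nat \<Rightarrow> nat \<times> nat \<Rightarrow> (nat \<Rightarrow> nat) \<Rightarrow> (nat \<Rightarrow> real) \<Rightarrow> real \<times> real
                   \<Rightarrow> (nat \<Rightarrow> nat) \<Rightarrow> real" where
  "SW n k prio x y s = (\<Sum>i<n. util n k prio x y s i)"

definition best_util :: "nat \<Rightarrow> nat \<times> nat \<Rightarrow> (nat \<Rightarrow> nat) \<Rightarrow> (nat \<Rightarrow> real) \<Rightarrow> real \<times> real
                         \<Rightarrow> (nat \<Rightarrow> nat) \<Rightarrow> nat \<Rightarrow> real" where
  "best_util n k prio x y s i =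
     max (util n k prio x y (s(i := 1)) i) (util n k prio x y (s(i := 2)) i)"

definition absolutely_truthful :: "nat \<Rightarrow> nat \<times> nat \<Rightarrow> (nat \<Rightarrow> nat)
                                    \<Rightarrow> ((nat \<Rightarrow> real) \<Rightarrow> real \<times> real) \<Rightarrow> bool" where
  "absolutely_truthful n k prio M \<longleftrightarrow>
     (\<forall>i<n. \<forall>x x' s. positions n x \<and> 0 \<le> x' \<and> x' \<le> 1 \<and> profile n s \<longrightarrow>
        best_util n k prio x (M x) s i \<ge> best_util n k prio x (M (x(i := x'))) s i)"

definition equilibrium_stable :: "nat \<Rightarrow> nat \<times> nat \<Rightarrow> (nat \<Rightarrow> nat)
                                   \<Rightarrow> ((nat \<Rightarrow> real) \<Rightarrow> real \<times> real) \<Rightarrow> bool" where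
  "equilibrium_stable n k prio M \<longleftrightarrow> absolutely_truthful n k prio M \<and>
     (\<forall>x. positions n x \<longrightarrow>
        (\<forall>s s'. is_NE n k prio x (M x) s \<and> is_NE n k prio x (M x) s' \<longrightarrow>
           SW n k prio x (M x) s = SW n k prio x (M x) s'))"

(* 0-based index of the v-percentile: paper's x_{floor((n-1)v)+1} *)
definition pct_index :: "nat \<Rightarrow> real \<Rightarrow> nat" where
  "pct_index n v = nat \<lfloor>real (n - 1) * v\<rfloor>"

definition percentile_mech :: "nat \<Rightarrow> real \<times> real \<Rightarrow> (nat \<Rightarrow> real) \<Rightarrow> real \<times> real" where
  "percentile_mech n v x =
     (let xs = sort (map x [0..<n])
      in (xs ! pct_index n (fst v), xs ! pct_index n (snd v)))"

end

theory Submission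
  imports Defs "HOL-Library.Product_Lexorder"
begin

text \<open>
  Every percentile mechanism is absolutely truthful: a facility sits at an order statistic of the
  reports, and changing the report of agent \<open>i\<close> can only move an order statistic away from
  \<open>x i\<close>. After a misreport every facility is therefore farther from \<open>i\<close>, and every agent
  served before \<open>i\<close> at a facility still is, whatever \<open>i\<close> chooses.

  For stability, suppose two equilibria \<open>s\<close>, \<open>s'\<close> give some agents different utilities and
  take such an agent \<open>i\<close> maximising the larger of its two utilities, ties broken by priority; say
  \<open>i\<close> obtains \<open>w\<close> in \<open>s\<close> at facility \<open>j\<close> and less in \<open>s'\<close>. In \<open>s'\<close>, switching to \<open>j\<close>
  (or to the other facility, if it is at the same place) does not give \<open>i\<close> the utility \<open>w\<close>,
  so the facility is filled with agents served ahead of \<open>i\<close>, each getting at least \<open>w\<close>. Fewer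
  agents are served ahead of \<open>i\<close> there in \<open>s\<close>, so one of them does not get the same utility in
  \<open>s\<close>, contradicting the choice of \<open>i\<close>. The last step needs that an agent's utility determines
  the location serving it; for a side-by-side mechanism the facilities are at adjacent order
  statistics, so either they coincide or no agent is equidistant from them.
\<close>

section \<open>Order statistics\<close>

lemma sorted_nth_iff_less_length_filter:
  fixes ys :: "'a::linorder list"
  assumes "sorted ys" "q < length ys" and down_closed: "\<And>a b. P b \<Longrightarrow> a \<le> b \<Longrightarrow> P a"
  shows "P (ys ! q) \<longleftrightarrow> q < length (filter P ys)"
  using assms(1,2)
proof (induction ys arbitrary: q)
  case Nil
  then show ?case by simp
next
  case (Cons a ys)
  show ?case
  proof (cases "P a")
    case True
    then show ?thesis using Cons by (cases q) auto
  next
    case False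
    then have none: "\<forall>b\<in>set (a # ys). \<not> P b" using Cons.prems down_closed by auto
    moreover have "(a # ys) ! q \<in> set (a # ys)" using Cons.prems(2) by (intro nth_mem) simp
    ultimately have "\<not> P ((a # ys) ! q)" by blast
    moreover have "filter P (a # ys) = []" using none by (simp only: filter_empty_conv)
    ultimately show ?thesis by simp
  qed
qed

lemma sort_nth_iff_less_card:
  fixes f :: "nat \<Rightarrow> 'a::linorder"
  assumes "q < n" "\<And>a b. P b \<Longrightarrow> a \<le> b \<Longrightarrow> P a"
  shows "P (sort (map f [0..<n]) ! q) \<longleftrightarrow> q < card {j. j < n \<and> P (f j)}"
proof -
  have "P (sort (map f [0..<n]) ! q) \<longleftrightarrow> q < length (filter P (sort (map f [0..<n])))"
    by (rule sorted_nth_iff_less_length_filter) (use assms in auto)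
  also have "length (filter P (sort (map f [0..<n]))) = card {j. j < n \<and> P (f j)}"
    by (simp add: filter_sort length_filter_conv_card cong: conj_cong)
  finally show ?thesis .
qed

lemma sort_nth_between_update:
  fixes x :: "nat \<Rightarrow> 'a::linorder" and r :: 'a
  assumes "q < n" "i < n"
  defines "z \<equiv> sort (map x [0..<n]) ! q"
    and "z' \<equiv> sort (map (x(i := r)) [0..<n]) ! q"
  shows "min (x i) z' \<le> z \<and> z \<le> max (x i) z'"
proof -
  have le_down_closed: "\<And>a b. b \<le> t \<Longrightarrow> a \<le> b \<Longrightarrow> a \<le> t" for t :: 'a
    by (rule order_trans)
  have less_down_closed: "\<And>a b. b < t \<Longrightarrow> a \<le> b \<Longrightarrow> a < t" for t :: 'a
    by (rule le_less_trans)
  have "z \<le> z'" if "x i < z"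
  proof (rule ccontr)
    assume "\<not> z \<le> z'"
    define t where "t = max z' (x i)"
    have "q < card {j. j < n \<and> (x(i := r)) j \<le> t}"
      using sort_nth_iff_less_card[of q n "\<lambda>a. a \<le> t" "x(i := r)", OF _ le_down_closed]
      unfolding z'_def[symmetric] using assms(1) by (simp add: t_def)
    also have "\<dots> \<le> card {j. j < n \<and> x j \<le> t}"
      by (rule card_mono) (auto simp: t_def)
    finally have "z \<le> t"
      using sort_nth_iff_less_card[of q n "\<lambda>a. a \<le> t" x, OF _ le_down_closed]
      unfolding z_def[symmetric] using assms(1) by simp
    then show False using that \<open>\<not> z \<le> z'\<close> by (metis t_def le_max_iff_disj not_le)
  qed
  moreover have "z' \<le> z" if "z < x i"
  proof (rule ccontr)
    assume "\<not> z' \<le> z"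
    define t where "t = min z' (x i)"
    have "z < t" using that \<open>\<not> z' \<le> z\<close> by (simp add: t_def)
    then have "q < card {j. j < n \<and> x j < t}"
      using sort_nth_iff_less_card[of q n "\<lambda>a. a < t" x, OF _ less_down_closed]
      unfolding z_def[symmetric] using assms(1) by simp
    also have "\<dots> \<le> card {j. j < n \<and> (x(i := r)) j < t}"
      by (rule card_mono) (auto simp: t_def)
    finally have "z' < t"
      using sort_nth_iff_less_card[of q n "\<lambda>a. a < t" "x(i := r)", OF _ less_down_closed]
      unfolding z'_def[symmetric] using assms(1) by simp
    then show False by (simp add: t_def)
  qed
  ultimately show ?thesis by (metis le_max_iff_disj min_le_iff_disj not_le)
qed

section \<open>Truthfulness of percentile mechanisms\<close>

lemma dist_mono_if_between:
  fixes a y y' z :: real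
  assumes "min a y' \<le> y" "y \<le> max a y'"
  shows "\<bar>z - y\<bar> \<le> \<bar>a - y\<bar> \<Longrightarrow> \<bar>z - y'\<bar> \<le> \<bar>a - y'\<bar>"
    and "\<bar>z - y\<bar> < \<bar>a - y\<bar> \<Longrightarrow> \<bar>z - y'\<bar> < \<bar>a - y'\<bar>"
    and "\<bar>a - y\<bar> \<le> \<bar>a - y'\<bar>"
  using assms by (auto simp: min_def max_def split: if_splits)

lemma precedes_if_between:
  assumes "min (x i) (fpos y' a) \<le> fpos y a" "fpos y a \<le> max (x i) (fpos y' a)"
    and "precedes prio x y a l i"
  shows "precedes prio x y' a l i"
  using assms(3) dist_mono_if_between(1,2)[OF assms(1,2), of "x l"]
  unfolding precedes_def by auto

lemma util_le_if_between:
  assumes "s i = a"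
    and "min (x i) (fpos y' a) \<le> fpos y a" "fpos y a \<le> max (x i) (fpos y' a)"
    and "\<bar>x i - fpos y a\<bar> \<le> 1"
  shows "util n k prio x y' s i \<le> util n k prio x y s i"
proof -
  have "card {l \<in> choosers n s a. precedes prio x y a l i}
      \<le> card {l \<in> choosers n s a. precedes prio x y' a l i}"
    using precedes_if_between[where x = x and i = i, OF assms(2,3)]
    by (intro card_mono) (auto simp: choosers_def)
  then have "i \<in> served n k prio x y s a" if "i \<in> served n k prio x y' s a"
    using that by (auto simp: served_def)
  then show ?thesis
    using dist_mono_if_between(3)[OF assms(2,3)] assms(1,4) by (auto simp: util_def)
qed

lemma pct_index_less:
  assumes "0 < n" "0 \<le> v" "v \<le> 1"
  shows "pct_index n v < n"
proof -
  have "real (n - 1) * v \<le> real (n - 1)"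
    using assms(2,3) by (simp add: mult_left_le)
  then have "\<lfloor>real (n - 1) * v\<rfloor> \<le> int (n - 1)"
    by (metis floor_mono floor_of_nat)
  then show ?thesis using assms(1) by (simp add: pct_index_def)
qed

lemma fpos_percentile_mech:
  "fpos (percentile_mech n v x) a = sort (map x [0..<n]) ! pct_index n (fpos v a)"
  by (simp add: fpos_def percentile_mech_def Let_def)

lemma percentile_mech_dist_le_1:
  assumes "positions n x" "m < n" "0 \<le> fpos v a" "fpos v a \<le> 1"
  shows "\<bar>x m - fpos (percentile_mech n v x) a\<bar> \<le> 1"
proof -
  have "sort (map x [0..<n]) ! pct_index n (fpos v a) \<in> set (map x [0..<n])"
    using pct_index_less[of n, OF _ assms(3,4)] assms(2)
    by (metis length_map length_sort length_upt minus_nat.diff_0 nth_mem set_sort gr_zeroI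
        not_less0)
  then obtain l where "l < n" "fpos (percentile_mech n v x) a = x l"
    by (auto simp: fpos_percentile_mech)
  moreover have "0 \<le> x l \<and> x l \<le> 1" "0 \<le> x m \<and> x m \<le> 1"
    using assms(1,2) \<open>l < n\<close> by (simp_all add: positions_def)
  ultimately show ?thesis by (simp add: abs_le_iff)
qed

lemma percentile_mech_absolutely_truthful:
  assumes "0 \<le> fst v" "fst v \<le> 1" "0 \<le> snd v" "snd v \<le> 1"
  shows "absolutely_truthful n k prio (percentile_mech n v)"
  unfolding absolutely_truthful_def
proof (intro allI impI)
  fix i x s and x' :: real
  assume i: "i < n" and hyps: "positions n x \<and> 0 \<le> x' \<and> x' \<le> 1 \<and> profile n s"
  then have n: "0 < n" and x: "positions n x" by simp_all
  have v: "0 \<le> fpos v a" "fpos v a \<le> 1" for a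
    using assms by (simp_all add: fpos_def)
  have "util n k prio x (percentile_mech n v (x(i := x'))) (s(i := a)) i
      \<le> util n k prio x (percentile_mech n v x) (s(i := a)) i" for a
  proof (rule util_le_if_between)
    show "min (x i) (fpos (percentile_mech n v (x(i := x'))) a) \<le> fpos (percentile_mech n v x) a"
      and "fpos (percentile_mech n v x) a \<le> max (x i) (fpos (percentile_mech n v (x(i := x'))) a)"
      unfolding fpos_percentile_mech
      using sort_nth_between_update[OF pct_index_less[OF n v] i, of x x'] by simp_all
    show "\<bar>x i - fpos (percentile_mech n v x) a\<bar> \<le> 1"
      using percentile_mech_dist_le_1[OF x i v] .
  qed simp
  then show "best_util n k prio x (percentile_mech n v (x(i := x'))) s i
      \<le> best_util n k prio x (percentile_mech n v x) s i"
    unfolding best_util_def by (meson max.mono)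
qed

section \<open>Ranks in the service order\<close>

locale finite_strict_total =
  fixes S :: "'a set" and R :: "'a \<Rightarrow> 'a \<Rightarrow> bool"
  assumes finite: "finite S"
    and irrefl: "\<And>a. \<not> R a a"
    and trans: "\<And>a b c. R a b \<Longrightarrow> R b c \<Longrightarrow> R a c"
    and total: "\<And>a b. a \<in> S \<Longrightarrow> b \<in> S \<Longrightarrow> a \<noteq> b \<Longrightarrow> R a b \<or> R b a"
begin

definition rank :: "'a \<Rightarrow> nat" where
  "rank b = card {l \<in> S. R l b}"

lemma rank_less:
  assumes "R a b" "a \<in> S"
  shows "rank a < rank b"
proof -
  have "{l \<in> S. R l a} \<subseteq> {l \<in> S. R l b}" using assms(1) trans by blast
  moreover have "a \<in> {l \<in> S. R l b} - {l \<in> S. R l a}" using assms irrefl by blast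
  ultimately have "{l \<in> S. R l a} \<subset> {l \<in> S. R l b}" by blast
  then show ?thesis unfolding rank_def using finite by (intro psubset_card_mono) auto
qed

lemma inj_on_rank: "inj_on rank S"
  unfolding inj_on_def by (metis rank_less total less_irrefl)

lemma card_rank_less_le: "card {b \<in> S. rank b < k} \<le> k"
proof -
  have "card {b \<in> S. rank b < k} = card (rank ` {b \<in> S. rank b < k})"
    by (rule card_image[symmetric]) (rule inj_on_subset[OF inj_on_rank], auto)
  also have "\<dots> \<le> card {..<k}" by (rule card_mono) auto
  finally show ?thesis by simp
qed

text \<open>The predecessors of any element are ranked \<open>0, 1, \<dots>\<close> without gaps.\<close>

lemma le_card_rank_less_predecessors:
  assumes "k \<le> card {l \<in> S. R l i}"
  shows "k \<le> card {b \<in> {l \<in> S. R l i}. rank b < k}"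
proof -
  define B where "B = {l \<in> S. R l i}"
  have finB: "finite B" using finite by (simp add: B_def)
  have inj: "inj_on rank B" by (rule inj_on_subset[OF inj_on_rank]) (auto simp: B_def)
  have sub: "rank ` B \<subseteq> {..<card B}"
  proof
    fix z assume "z \<in> rank ` B"
    then obtain b where b: "b \<in> B" "z = rank b" by auto
    have "{l \<in> S. R l b} \<subseteq> B - {b}" using b irrefl trans by (auto simp: B_def)
    then have "rank b \<le> card (B - {b})" unfolding rank_def using finB by (intro card_mono) auto
    also have "\<dots> < card B" using b finB by (intro card_Diff1_less)
    finally show "z \<in> {..<card B}" using b by simp
  qed
  have ranks: "rank ` B = {..<card B}"
    by (rule card_subset_eq) (use sub inj card_image in auto)
  have "{..<k} \<subseteq> rank ` {b \<in> B. rank b < k}"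
  proof
    fix z assume z: "z \<in> {..<k}"
    then have "z \<in> rank ` B" using ranks assms by (auto simp: B_def)
    then show "z \<in> rank ` {b \<in> B. rank b < k}" using z by auto
  qed
  then have "card {..<k} \<le> card (rank ` {b \<in> B. rank b < k})"
    using finB by (intro card_mono) auto
  then have "k \<le> card (rank ` {b \<in> B. rank b < k})" by simp
  also have "\<dots> \<le> card {b \<in> B. rank b < k}"
    using finB by (intro card_image_le) auto
  finally show ?thesis by (simp add: B_def)
qed

end

lemma precedes_irrefl: "\<not> precedes prio x y j l l"
  by (simp add: precedes_def)

lemma precedes_trans:
  "precedes prio x y j a b \<Longrightarrow> precedes prio x y j b c \<Longrightarrow> precedes prio x y j a c"
  unfolding precedes_def by auto

lemma precedes_total:
  assumes "inj_on prio {..<n}" "a < n" "b < n" "a \<noteq> b"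
  shows "precedes prio x y j a b \<or> precedes prio x y j b a"
  using assms unfolding precedes_def inj_on_def
  by (metis lessThan_iff linorder_neqE_linordered_idom linorder_neqE_nat)

lemma finite_strict_total_precedes:
  "inj_on prio {..<n} \<Longrightarrow> finite_strict_total (choosers n s j) (precedes prio x y j)"
  by unfold_locales
    (auto simp: choosers_def precedes_irrefl intro: precedes_trans
      dest: precedes_total[of prio n _ _ x y j])

lemma served_eq_rank_less:
  assumes "inj_on prio {..<n}"
  shows "served n k prio x y s j =
    {b \<in> choosers n s j.
      finite_strict_total.rank (choosers n s j) (precedes prio x y j) b < fcap k j}"
  using finite_strict_total.rank_def[OF finite_strict_total_precedes[OF assms]]
  by (simp add: served_def)

lemma card_served_le:
  "inj_on prio {..<n} \<Longrightarrow> card (served n k prio x y s j) \<le> fcap k j"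
  unfolding served_eq_rank_less
  by (rule finite_strict_total.card_rank_less_le[OF finite_strict_total_precedes])

lemma served_chosen: "m \<in> served n k prio x y s a \<Longrightarrow> s m = a \<and> m < n"
  by (auto simp: served_def choosers_def)

lemma finite_served: "finite (served n k prio x y s j)"
  by (rule finite_subset[where B = "{..<n}"]) (auto dest: served_chosen)

lemma card_served_predecessors_less:
  assumes "i \<in> served n k prio x y s j"
  shows "card {m \<in> served n k prio x y s j. precedes prio x y j m i} < fcap k j"
proof -
  have "card {m \<in> served n k prio x y s j. precedes prio x y j m i}
      \<le> card {l \<in> choosers n s j. precedes prio x y j l i}"
    by (intro card_mono) (auto simp: served_def choosers_def)
  then show ?thesis using assms by (simp add: served_def)
qed

lemma le_card_served_predecessors_if_rejected:
  assumes inj: "inj_on prio {..<n}" and "i < n"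
    and rejected: "i \<notin> served n k prio x y (s(i := j)) j"
  shows "fcap k j \<le> card {m \<in> served n k prio x y s j. precedes prio x y j m i}"
proof -
  interpret finite_strict_total "choosers n s j" "precedes prio x y j"
    by (rule finite_strict_total_precedes[OF inj])
  have "choosers n (s(i := j)) j = insert i (choosers n s j)"
    using \<open>i < n\<close> by (auto simp: choosers_def)
  then have "{l \<in> choosers n (s(i := j)) j. precedes prio x y j l i}
      = {l \<in> choosers n s j. precedes prio x y j l i}"
    using precedes_irrefl[of prio x y j i] by auto
  with rejected \<open>i < n\<close> have "fcap k j \<le> card {l \<in> choosers n s j. precedes prio x y j l i}"
    by (auto simp: served_def choosers_def)
  then have "fcap k j \<le> card {b \<in> {l \<in> choosers n s j. precedes prio x y j l i}. rank b < fcap k j}"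
    by (rule le_card_rank_less_predecessors)
  also have "\<dots> \<le> card {m \<in> served n k prio x y s j. precedes prio x y j m i}"
    by (rule card_mono) (auto simp: served_eq_rank_less[OF inj] choosers_def)
  finally show ?thesis .
qed

lemma util_served:
  "m \<in> served n k prio x y s a \<Longrightarrow> util n k prio x y s m = 1 - \<bar>x m - fpos y a\<bar>"
  by (simp add: util_def served_chosen)

lemma util_unserved:
  "m \<notin> served n k prio x y s (s m) \<Longrightarrow> util n k prio x y s m = 0"
  by (simp add: util_def)

lemma util_served_predecessor:
  assumes "m \<in> served n k prio x y s a" "precedes prio x y a m i"
  shows "1 - \<bar>x i - fpos y a\<bar> \<le> util n k prio x y s m
    \<and> (util n k prio x y s m = 1 - \<bar>x i - fpos y a\<bar> \<longrightarrow> prio m < prio i)"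
  using assms(2) unfolding util_served[OF assms(1)] precedes_def by auto

section \<open>Equilibria of the first-come-first-served game\<close>

locale fcfs_game =
  fixes n :: nat and k :: "nat \<times> nat" and prio :: "nat \<Rightarrow> nat"
    and x :: "nat \<Rightarrow> real" and y :: "real \<times> real"
  assumes inj_prio: "inj_on prio {..<n}"
    and dist_le_1: "\<And>m j. m < n \<Longrightarrow> \<bar>x m - fpos y j\<bar> \<le> 1"
begin

abbreviation u :: "(nat \<Rightarrow> nat) \<Rightarrow> nat \<Rightarrow> real" where
  "u s i \<equiv> util n k prio x y s i"

abbreviation served_at :: "(nat \<Rightarrow> nat) \<Rightarrow> nat \<Rightarrow> nat set" where
  "served_at s j \<equiv> served n k prio x y s j"

abbreviation precedes_at :: "nat \<Rightarrow> nat \<Rightarrow> nat \<Rightarrow> bool" where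
  "precedes_at j l i \<equiv> precedes prio x y j l i"

lemma util_nonneg: "i < n \<Longrightarrow> 0 \<le> u s i"
  using dist_le_1[of i "s i"] by (simp add: util_def)

lemma le_card_served_predecessors_if_NE:
  assumes "is_NE n k prio x y s" "i < n" "a \<in> {1, 2}" "u s i < 1 - \<bar>x i - fpos y a\<bar>"
  shows "fcap k a \<le> card {m \<in> served_at s a. precedes_at a m i}"
proof (rule le_card_served_predecessors_if_rejected[OF inj_prio \<open>i < n\<close>])
  show "i \<notin> served_at (s(i := a)) a"
  proof
    assume "i \<in> served_at (s(i := a)) a"
    then have "u (s(i := a)) i = 1 - \<bar>x i - fpos y a\<bar>" by (rule util_served)
    moreover have "u (s(i := a)) i \<le> u s i" using assms(1-3) by (auto simp: is_NE_def)
    ultimately show False using assms(4) by linarith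
  qed
qed

lemma NE_overtaken_at_own_facility:
  assumes "is_NE n k prio x y s'" "i < n" "j \<in> {1, 2}"
    and "i \<in> served_at s j" "u s' i < 1 - \<bar>x i - fpos y j\<bar>"
  obtains m where "m \<in> served_at s' j" "m \<notin> served_at s j" "precedes_at j m i"
proof -
  have "card {m \<in> served_at s j. precedes_at j m i}
      < card {m \<in> served_at s' j. precedes_at j m i}"
    using card_served_predecessors_less[OF assms(4)]
      le_card_served_predecessors_if_NE[OF assms(1-3,5)] by linarith
  then have "\<not> {m \<in> served_at s' j. precedes_at j m i} \<subseteq> {m \<in> served_at s j. precedes_at j m i}"
    using finite_served
    by (metis (no_types, lifting) card_mono finite_subset linorder_not_le mem_Collect_eq subsetI)
  then show thesis using that by blast
qed

lemma NE_overtaken_at_shared_location: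
  assumes "is_NE n k prio x y s'" "i < n" "j \<in> {1, 2}" "fpos y 1 = fpos y 2"
    and "i \<in> served_at s j" "u s' i < 1 - \<bar>x i - fpos y j\<bar>"
  obtains m a where "a \<in> {1, 2}" "m \<in> served_at s' a" "m \<notin> served_at s 1" "m \<notin> served_at s 2"
    "precedes_at a m i"
proof -
  have same_location: "fpos y a = fpos y 1" for a
    using assms(4) by (simp add: fpos_def)
  have same_order: "precedes_at a = precedes_at 1" for a
    by (intro ext) (simp add: precedes_def same_location[of a])
  define P where "P a = {m \<in> served_at s' a. precedes_at 1 m i}" for a
  define Q where "Q a = {m \<in> served_at s a. precedes_at 1 m i}" for a
  have fin: "finite (P a)" "finite (Q a)" for a
    unfolding P_def Q_def using finite_served by simp_all
  have P_large: "fcap k a \<le> card (P a)" if "a \<in> {1, 2}" for a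
    using le_card_served_predecessors_if_NE[OF assms(1,2) that] assms(6) same_location[of a]
      same_location[of j] same_order[of a]
    by (simp add: P_def)
  have "P 1 \<inter> P 2 = {}"
    using served_chosen[of _ n k prio x y s' 1] served_chosen[of _ n k prio x y s' 2]
    unfolding P_def by fastforce
  then have P_card: "card (P 1 \<union> P 2) = card (P 1) + card (P 2)"
    using fin by (simp add: card_Un_disjoint)
  have Q_small: "card (Q a) \<le> fcap k a" for a
  proof -
    have "card (Q a) \<le> card (served_at s a)"
      unfolding Q_def using finite_served by (intro card_mono) auto
    then show ?thesis using card_served_le[OF inj_prio, of k x y s a] by linarith
  qed
  have "card (Q j) < fcap k j"
    using card_served_predecessors_less[OF assms(5)] same_order[of j] by (simp add: Q_def)
  then have "card (Q 1) + card (Q 2) < fcap k 1 + fcap k 2"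
    using Q_small[of 1] Q_small[of 2] assms(3) by auto
  then have "card (Q 1 \<union> Q 2) < card (P 1 \<union> P 2)"
    using card_Un_le[of "Q 1" "Q 2"] P_card P_large[of 1] P_large[of 2] by simp
  then have "\<not> P 1 \<union> P 2 \<subseteq> Q 1 \<union> Q 2"
    using fin card_mono[of "Q 1 \<union> Q 2" "P 1 \<union> P 2"] by auto
  then obtain m where m: "m \<in> P 1 \<union> P 2" "m \<notin> Q 1 \<union> Q 2" by blast
  then obtain a where "a \<in> {1, 2}" "m \<in> served_at s' a" "precedes_at 1 m i"
    by (auto simp: P_def)
  with m(2) show thesis
    using that[of a m] same_order[of a] by (simp add: Q_def)
qed

lemma NE_overtaken:
  assumes NE: "is_NE n k prio x y s" "is_NE n k prio x y s'" and "i < n"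
    and "i \<in> served_at s j" "u s' i < 1 - \<bar>x i - fpos y j\<bar>"
  obtains m a where "m \<in> served_at s' a" "precedes_at a m i" "fpos y a = fpos y j"
    "m \<notin> served_at s (s m) \<or> fpos y (s m) \<noteq> fpos y a"
proof -
  have s_profile: "s m \<in> {1, 2}" if "m < n" for m
    using NE(1) that by (simp add: is_NE_def profile_def)
  have j: "j \<in> {1, 2}" using s_profile \<open>i < n\<close> served_chosen[OF assms(4)] by blast
  show thesis
  proof (cases "fpos y 1 = fpos y 2")
    case True
    obtain m a where m: "a \<in> {1, 2}" "m \<in> served_at s' a" "m \<notin> served_at s 1"
      "m \<notin> served_at s 2" "precedes_at a m i"
      using NE_overtaken_at_shared_location[OF NE(2) \<open>i < n\<close> j True assms(4,5)] by blast
    have "m \<notin> served_at s (s m)"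
      using m(3,4) s_profile[of m] served_chosen[OF m(2)] by auto
    moreover have "fpos y a = fpos y j" using True by (simp add: fpos_def)
    ultimately show thesis using that m(2,5) by blast
  next
    case False
    obtain m where m: "m \<in> served_at s' j" "m \<notin> served_at s j" "precedes_at j m i"
      using NE_overtaken_at_own_facility[OF NE(2) \<open>i < n\<close> j assms(4,5)] by blast
    have "fpos y (s m) \<noteq> fpos y j" if "s m \<noteq> j"
      using False that j s_profile[of m] served_chosen[OF m(1)] by (auto simp: fpos_def)
    then have "m \<notin> served_at s (s m) \<or> fpos y (s m) \<noteq> fpos y j"
      using m(2) by auto
    then show thesis using that m(1,3) by blast
  qed
qed

end

locale unambiguous_fcfs_game = fcfs_game +
  assumes location_determined:
    "\<And>m a b. m < n \<Longrightarrow> \<bar>x m - fpos y a\<bar> = \<bar>x m - fpos y b\<bar> \<Longrightarrow> fpos y a = fpos y b"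
begin

lemma NE_util_loss_witness:
  assumes NE: "is_NE n k prio x y s" "is_NE n k prio x y s'"
    and "i < n" and loss: "u s' i < u s i"
  obtains m where "m < n" "u s m \<noteq> u s' m" "u s i \<le> u s' m" "u s' m = u s i \<Longrightarrow> prio m < prio i"
proof -
  have "i \<in> served_at s (s i)"
    using loss util_nonneg[OF \<open>i < n\<close>, of s'] util_unserved[of i n k prio x y s] by force
  then have ui: "u s i = 1 - \<bar>x i - fpos y (s i)\<bar>" by (rule util_served)
  with loss have "u s' i < 1 - \<bar>x i - fpos y (s i)\<bar>" by simp
  then obtain m a where m: "m \<in> served_at s' a" "precedes_at a m i" "fpos y a = fpos y (s i)"
    and moved: "m \<notin> served_at s (s m) \<or> fpos y (s m) \<noteq> fpos y a"
    using NE_overtaken[OF NE \<open>i < n\<close> \<open>i \<in> served_at s (s i)\<close>] by blast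
  have m_gain: "u s i \<le> u s' m \<and> (u s' m = u s i \<longrightarrow> prio m < prio i)"
    using util_served_predecessor[OF m(1,2)] ui m(3) by simp
  have "u s m \<noteq> u s' m"
  proof
    assume same: "u s m = u s' m"
    have "0 < u s' m" using m_gain loss util_nonneg[OF \<open>i < n\<close>, of s'] by linarith
    then have "m \<in> served_at s (s m)" using same util_unserved[of m n k prio x y s] by force
    then have "\<bar>x m - fpos y (s m)\<bar> = \<bar>x m - fpos y a\<bar>"
      using same util_served[OF m(1)] util_served[of m] by simp
    then show False
      using moved location_determined served_chosen[OF m(1)] \<open>m \<in> served_at s (s m)\<close> by blast
  qed
  then show thesis using that m_gain served_chosen[OF m(1)] by blast
qed

lemma NE_util_eq:
  assumes NE: "is_NE n k prio x y s" "is_NE n k prio x y s'"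
    and "i < n"
  shows "u s i = u s' i"
proof (rule ccontr)
  assume "u s i \<noteq> u s' i"
  define D where "D = {m. m < n \<and> u s m \<noteq> u s' m}"
  define key where "key m = (max (u s m) (u s' m), - int (prio m))" for m
  have "finite (key ` D)" "key i \<in> key ` D"
    using \<open>i < n\<close> \<open>u s i \<noteq> u s' i\<close> by (simp_all add: D_def)
  then have "Max (key ` D) \<in> key ` D" by (intro Max_in) auto
  then obtain t where t: "t \<in> D" "key t = Max (key ` D)" by auto
  have higher: "\<exists>m\<in>D. key t < key m"
    if NE12: "is_NE n k prio x y s1" "is_NE n k prio x y s2" and loss: "u s2 t < u s1 t"
      and key12: "\<And>m. key m = (max (u s1 m) (u s2 m), - int (prio m))"
      and D12: "\<And>m. m \<in> D \<longleftrightarrow> m < n \<and> u s1 m \<noteq> u s2 m" for s1 s2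
  proof -
    have "t < n" using D12[of t] t(1) by simp
    obtain m where m: "m < n" "u s1 m \<noteq> u s2 m" "u s1 t \<le> u s2 m"
      "u s2 m = u s1 t \<Longrightarrow> prio m < prio t"
      using NE_util_loss_witness[OF NE12 \<open>t < n\<close> loss] by blast
    have "key t = (u s1 t, - int (prio t))" using loss by (simp add: key12 max_def)
    then have "key t < key m"
      unfolding key12[of m] using m(3,4) by (cases "u s1 t < max (u s1 m) (u s2 m)") auto
    moreover have "m \<in> D" using m(1,2) D12 by simp
    ultimately show ?thesis by blast
  qed
  have "\<exists>m\<in>D. key t < key m"
  proof (cases "u s' t < u s t")
    case True
    then show ?thesis by (rule higher[OF NE]) (auto simp: key_def D_def)
  next
    case False
    then have "u s t < u s' t" using t(1) by (simp add: D_def)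
    then show ?thesis by (rule higher[OF NE(2,1)]) (auto simp: key_def D_def max.commute)
  qed
  then obtain m where "m \<in> D" "key t < key m" by blast
  moreover have "key m \<le> key t"
    using Max_ge[OF \<open>finite (key ` D)\<close> imageI[OF \<open>m \<in> D\<close>]] t(2) by simp
  ultimately show False by simp
qed

lemma NE_SW_eq:
  assumes "is_NE n k prio x y s" "is_NE n k prio x y s'"
  shows "SW n k prio x y s = SW n k prio x y s'"
  unfolding SW_def using NE_util_eq[OF assms] by simp

end

section \<open>Side-by-side mechanisms\<close>

lemma sorted_adjacent_nth_eq_if_equidistant:
  fixes xs :: "real list"
  assumes "sorted xs" "Suc p < length xs" "z \<in> set xs"
    and "\<bar>z - xs ! p\<bar> = \<bar>z - xs ! Suc p\<bar>"
  shows "xs ! p = xs ! Suc p"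
proof -
  obtain q where q: "q < length xs" "z = xs ! q"
    using assms(3) by (metis in_set_conv_nth)
  have "xs ! p \<le> xs ! Suc p" using assms(1,2) by (simp add: sorted_nth_mono)
  moreover have "z \<le> xs ! p \<or> xs ! Suc p \<le> z"
    using assms(1,2) q by (cases "q \<le> p") (simp_all add: sorted_nth_mono)
  ultimately show ?thesis using assms(4) by linarith
qed

lemma side_by_side_location_determined:
  assumes "pct_index n (fst v) = p" "pct_index n (snd v) = Suc p" "Suc p < n" "m < n"
    and "\<bar>x m - fpos (percentile_mech n v x) a\<bar> = \<bar>x m - fpos (percentile_mech n v x) b\<bar>"
  shows "fpos (percentile_mech n v x) a = fpos (percentile_mech n v x) b"
proof -
  define xs where "xs = sort (map x [0..<n])"
  have at: "fpos (percentile_mech n v x) c \<in> {xs ! p, xs ! Suc p}" for c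
    unfolding fpos_percentile_mech xs_def using assms(1,2) by (simp add: fpos_def)
  moreover have "xs ! p = xs ! Suc p" if "\<bar>x m - xs ! p\<bar> = \<bar>x m - xs ! Suc p\<bar>"
    using sorted_adjacent_nth_eq_if_equidistant[OF _ _ _ that] assms(3,4) by (simp add: xs_def)
  ultimately show ?thesis using assms(5) by (metis insertE singletonD)
qed

lemma side_by_side_unambiguous_fcfs_game:
  assumes "inj_on prio {..<n}" "positions n x"
    and "0 \<le> fst v" "fst v \<le> 1" "0 \<le> snd v" "snd v \<le> 1"
    and "pct_index n (fst v) = p" "pct_index n (snd v) = Suc p" "Suc p < n"
  shows "unambiguous_fcfs_game n prio x (percentile_mech n v x)"
proof
  show "inj_on prio {..<n}" by (rule assms(1))
  have "0 \<le> fpos v a" "fpos v a \<le> 1" for a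
    using assms(3-6) by (simp_all add: fpos_def)
  then show "\<bar>x m - fpos (percentile_mech n v x) j\<bar> \<le> 1" if "m < n" for m j
    using percentile_mech_dist_le_1[OF assms(2) that] by blast
  show "fpos (percentile_mech n v x) a = fpos (percentile_mech n v x) b"
    if "m < n" "\<bar>x m - fpos (percentile_mech n v x) a\<bar> = \<bar>x m - fpos (percentile_mech n v x) b\<bar>"
    for m a b
    using side_by_side_location_determined[OF assms(7-9) that] .
qed

theorem theorem7:
  fixes n k1 k2 :: nat and v :: "real \<times> real" and prio :: "nat \<Rightarrow> nat"
  assumes "k1 + k2 < n"
    and "inj_on prio {..<n}"
    and "0 \<le> fst v" "fst v \<le> 1" "0 \<le> snd v" "snd v \<le> 1"
    and "\<exists>i\<in>{1..n-1}. pct_index n (fst v) + 1 = i \<and> pct_index n (snd v) + 1 = i + 1"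
  shows "equilibrium_stable n (k1, k2) prio (percentile_mech n v)"
proof -
  obtain p where p: "pct_index n (fst v) = p" "pct_index n (snd v) = Suc p" "Suc p < n"
    using assms(7) by fastforce
  have "SW n (k1, k2) prio x (percentile_mech n v x) s
      = SW n (k1, k2) prio x (percentile_mech n v x) s'"
    if "positions n x" "is_NE n (k1, k2) prio x (percentile_mech n v x) s"
      "is_NE n (k1, k2) prio x (percentile_mech n v x) s'" for x s s'
    using unambiguous_fcfs_game.NE_SW_eq[OF side_by_side_unambiguous_fcfs_game] assms(2-6) p that
    by blast
  then show ?thesis
    using percentile_mech_absolutely_truthful[OF assms(3-6)] by (simp add: equilibrium_stable_def)
qed

end
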